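(* Let $n,m,L\ge1$, $\alpha\in(0,1)$, $\beta\ge0$, $\rho\ge0$, and let data matrices $H\in\mathbb R^{n\times L}$, $H^+\in\mathbb R^{n\times L}$, $\Xi\in\mathbb R^{m\times L}$ be given. Define $$N_1:=\begin{bmatrix} I_n & H^+\\ 0 & -H\\ 0 & -\Xi\\ 0&0\\0&0\end{bmatrix}\begin{bmatrix}\beta I_n & 0\\ 0 & -I_L\end{bmatrix}\begin{bmatrix} I_n & H^+\\ 0 & -H\\ 0 & -\Xi\\ 0&0\\0&0\end{bmatrix}^{\!\top},\qquad N_2:=\begin{bmatrix} I_n&0&0\\0&0&0\\0&0&0\\0&I_n&0\\0&0&I_m\end{bmatrix}\begin{bmatrix}\rho^2 I_n&0&0\\0&-I_n&0\\0&0&-I_m\end{bmatrix}\begin{bmatrix} I_n&0&0\\0&0&0\\0&0&0\\0&I_n&0\\0&0&I_m\end{bmatrix}^{\!\top},$$ where the block rows have sizes $n,n,m,n,m$ (zero blocks sized accordingly), and let $\widetilde N_j:=\operatorname{diag}(N_j,0_{n\times n})$, $j=1,2$. For $P\in\mathbb R^{n\times n}$ symmetric, $L_K\in\mathbb R^{m\times n}$ and $\nu>0$, define the symmetric block matrix (block sizes $n,n,m,n,m,n$) $$S(P,L_K,\nu)=\begin{bmatrix} \alpha P-\nu I & 0 & 0 & 0 & 0 & 0\\ 0 & -P & -L_K^\top & -P & -L_K^\top & 0\\ 0 & -L_K & 0 & -L_K & 0 & L_K\\ 0 & -P & -L_K^\top & -P & -L_K^\top & 0\\ 0 & -L_K &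 0 & -L_K & 0 & L_K\\ 0 & 0 & L_K^\top & 0 & L_K^\top & P \end{bmatrix}.$$ Suppose there exist $\lambda_1,\lambda_2\ge0$, $\nu>0$, a symmetric positive definite $P\in\mathbb R^{n\times n}$ and $L_K\in\mathbb R^{m\times n}$ such that $$S(P,L_K,\nu)-\lambda_1\widetilde N_1-\lambda_2\widetilde N_2\succ0,$$ and set $K:=L_KP^{-1}$. Then for every pair $(A,B)\in\mathbb R^{n\times n}\times\mathbb R^{n\times m}$ for which there exists $W\in\mathbb R^{n\times L}$ with $H^+=AH+B\Xi+W$ and $WW^\top\preceq\beta I_n$, and every pair $(\Delta A,\Delta B)\in\mathbb R^{n\times n}\times\mathbb R^{n\times m}$ with $\Delta A\Delta A^\top+\Delta B\Delta B^\top\preceq\rho^2 I_n$, the closed-loop matrix $A_{\rm cl}:=A+BK+\Delta A+\Delta B\,K$ satisfies $$\alpha P-A_{\rm cl}\,P\,A_{\rm cl}^\top\succ0 .$$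
   Context: $\succ,\succeq,\preceq$ denote the Loewner order on symmetric matrices; $I_k$ is the $k\times k$ identity. In the paper, $(H,H^+,\Xi)=(H_{i-1},H_{i-1}^+,\Xi_{i-1})$ are the deviation data matrices collected on the previous segment, $\beta=\beta_{i-1}$ is the aggregated disturbance-energy bound, and $\rho=C\widetilde T_i$ is the Jacobian-variation bound. *)

theory Defs
  imports "Jordan_Normal_Form.Matrix"
begin

text \<open>Block matrices: row block sizes rs, column block sizes cs, blocks given
  as a list of block rows. Entry (i,j) is taken from the block containing it.\<close>

definition blk_idx :: "nat list \<Rightarrow> nat \<Rightarrow> nat" where
  "blk_idx rs i = (LEAST k. i < sum_list (take (Suc k) rs))"

definition block_mat :: "nat list \<Rightarrow> nat list \<Rightarrow> real mat list list \<Rightarrow> real mat" where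
  "block_mat rs cs Bs = mat (sum_list rs) (sum_list cs)
     (\<lambda>(i,j). let a = blk_idx rs i; b = blk_idx cs j
              in (Bs ! a ! b) $$ (i - sum_list (take a rs), j - sum_list (take b cs)))"

definition psd_mat :: "nat \<Rightarrow> real mat \<Rightarrow> bool" where
  "psd_mat k M \<longleftrightarrow> M \<in> carrier_mat k k \<and> M\<^sup>T = M \<and>
     (\<forall>x \<in> carrier_vec k. x \<bullet> (M *\<^sub>v x) \<ge> 0)"

definition pd_mat :: "nat \<Rightarrow> real mat \<Rightarrow> bool" where
  "pd_mat k M \<longleftrightarrow> M \<in> carrier_mat k k \<and> M\<^sup>T = M \<and>
     (\<forall>x \<in> carrier_vec k. x \<noteq> 0\<^sub>v k \<longrightarrow> x \<bullet> (M *\<^sub>v x) > 0)"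

definition N1_mat :: "nat \<Rightarrow> nat \<Rightarrow> nat \<Rightarrow> real \<Rightarrow> real mat \<Rightarrow> real mat \<Rightarrow> real mat \<Rightarrow> real mat" where
  "N1_mat n m L \<beta> H Hp Xi =
    (let F = block_mat [n,n,m,n,m] [n,L]
               [[1\<^sub>m n, Hp],
                [0\<^sub>m n n, -H],
                [0\<^sub>m m n, -Xi],
                [0\<^sub>m n n, 0\<^sub>m n L],
                [0\<^sub>m m n, 0\<^sub>m m L]];
         D = block_mat [n,L] [n,L]
               [[\<beta> \<cdot>\<^sub>m 1\<^sub>m n, 0\<^sub>m n L],
                [0\<^sub>m L n, -(1\<^sub>m L)]]
     in F * D * F\<^sup>T)"

definition N2_mat :: "nat \<Rightarrow> nat \<Rightarrow> real \<Rightarrow> real mat" where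
  "N2_mat n m \<rho> =
    (let F = block_mat [n,n,m,n,m] [n,n,m]
               [[1\<^sub>m n, 0\<^sub>m n n, 0\<^sub>m n m],
                [0\<^sub>m n n, 0\<^sub>m n n, 0\<^sub>m n m],
                [0\<^sub>m m n, 0\<^sub>m m n, 0\<^sub>m m m],
                [0\<^sub>m n n, 1\<^sub>m n, 0\<^sub>m n m],
                [0\<^sub>m m n, 0\<^sub>m m n, 1\<^sub>m m]];
         D = block_mat [n,n,m] [n,n,m]
               [[\<rho>\<^sup>2 \<cdot>\<^sub>m 1\<^sub>m n, 0\<^sub>m n n, 0\<^sub>m n m],
                [0\<^sub>m n n, -(1\<^sub>m n), 0\<^sub>m n m],
                [0\<^sub>m m n, 0\<^sub>m m n, -(1\<^sub>m m)]]
     in F * D * F\<^sup>T)"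

definition pad_mat :: "nat \<Rightarrow> nat \<Rightarrow> real mat \<Rightarrow> real mat" where
  "pad_mat n m N = block_mat [3*n+2*m, n] [3*n+2*m, n]
     [[N, 0\<^sub>m (3*n+2*m) n], [0\<^sub>m n (3*n+2*m), 0\<^sub>m n n]]"

definition S_mat :: "nat \<Rightarrow> nat \<Rightarrow> real \<Rightarrow> real mat \<Rightarrow> real mat \<Rightarrow> real \<Rightarrow> real mat" where
  "S_mat n m \<alpha> P LK \<nu> = block_mat [n,n,m,n,m,n] [n,n,m,n,m,n]
     [[\<alpha> \<cdot>\<^sub>m P - \<nu> \<cdot>\<^sub>m 1\<^sub>m n, 0\<^sub>m n n, 0\<^sub>m n m, 0\<^sub>m n n, 0\<^sub>m n m, 0\<^sub>m n n],
      [0\<^sub>m n n, -P, -(LK\<^sup>T), -P, -(LK\<^sup>T), 0\<^sub>m n n],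
      [0\<^sub>m m n, -LK, 0\<^sub>m m m, -LK, 0\<^sub>m m m, LK],
      [0\<^sub>m n n, -P, -(LK\<^sup>T), -P, -(LK\<^sup>T), 0\<^sub>m n n],
      [0\<^sub>m m n, -LK, 0\<^sub>m m m, -LK, 0\<^sub>m m m, LK],
      [0\<^sub>m n n, 0\<^sub>m n n, LK\<^sup>T, 0\<^sub>m n n, LK\<^sup>T, P]]"

end

theory Submission
  imports Defs
begin

(* For x \<noteq> 0 put s = K^T (B + dB)^T x and lift x to z = (x, A^T x, B^T x, dA^T x, dB^T x, -s).
   The data equation Hp = A H + B Xi + W with W W^T <= beta I, and the bound on (dA, dB), make
   the quadratic forms of the padded N1 and N2 nonnegative at z, so the LMI forces z^T S z > 0.
   Since P K^T = LK^T, the blocks of S complete a square: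
   z^T S z = alpha x^T P x - nu x^T x - x^T Acl P Acl^T x, and the claim follows. *)

definition block_offset :: "nat list \<Rightarrow> nat \<Rightarrow> nat" where
  "block_offset rs a = sum_list (take a rs)"

definition vec_block :: "nat list \<Rightarrow> real vec \<Rightarrow> nat \<Rightarrow> real vec" where
  "vec_block rs z a = vec (rs ! a) (\<lambda>i. z $ (block_offset rs a + i))"

definition vec_concat :: "nat list \<Rightarrow> real vec list \<Rightarrow> real vec" where
  "vec_concat rs xs = vec (sum_list rs)
     (\<lambda>i. xs ! blk_idx rs i $ (i - block_offset rs (blk_idx rs i)))"

definition block_dims :: "nat list \<Rightarrow> nat list \<Rightarrow> real mat list list \<Rightarrow> bool" where
  "block_dims rs cs Bs \<longleftrightarrow>
     list_all2 (\<lambda>r row. list_all2 (\<lambda>c B. B \<in> carrier_mat r c) cs row) rs Bs"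

definition block_transpose :: "nat list \<Rightarrow> nat list \<Rightarrow> real mat list list \<Rightarrow> real mat list list" where
  "block_transpose rs cs Bs = map (\<lambda>b. map (\<lambda>a. (Bs ! a ! b)\<^sup>T) [0..<length rs]) [0..<length cs]"

lemma block_dims_nth:
  "block_dims rs cs Bs \<Longrightarrow> a < length rs \<Longrightarrow> b < length cs \<Longrightarrow> Bs ! a ! b \<in> carrier_mat (rs ! a) (cs ! b)"
  unfolding block_dims_def list_all2_conv_all_nth by auto

lemma block_dims_transpose: "block_dims rs cs Bs \<Longrightarrow> block_dims cs rs (block_transpose rs cs Bs)"
  unfolding block_dims_def block_transpose_def list_all2_conv_all_nth by auto

lemma sum_list_take_mono: "j \<le> a \<Longrightarrow> sum_list (take j rs) \<le> sum_list (take a (rs :: nat list))"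
proof -
  assume "j \<le> a"
  then obtain d where "a = j + d" using le_Suc_ex by blast
  then show ?thesis by (simp add: take_add)
qed

lemma sum_list_take_Suc: "a < length rs \<Longrightarrow> sum_list (take (Suc a) rs) = block_offset rs a + rs ! a"
  by (simp add: block_offset_def take_Suc_conv_app_nth)

lemma block_offset_add_le: "a < length rs \<Longrightarrow> block_offset rs a + rs ! a \<le> sum_list rs"
  using sum_list_take_mono[of "Suc a" "length rs" rs] sum_list_take_Suc[of a rs] by simp

lemma blk_idx_block_offset:
  assumes "a < length rs" "i < rs ! a"
  shows "blk_idx rs (block_offset rs a + i) = a"
  unfolding blk_idx_def
proof (rule Least_equality)
  show "block_offset rs a + i < sum_list (take (Suc a) rs)"
    using assms sum_list_take_Suc by simp
next
  fix k assume k: "block_offset rs a + i < sum_list (take (Suc k) rs)"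
  show "a \<le> k"
  proof (rule ccontr)
    assume "\<not> a \<le> k"
    then have "sum_list (take (Suc k) rs) \<le> block_offset rs a"
      unfolding block_offset_def by (intro sum_list_take_mono) auto
    with k show False by simp
  qed
qed

lemma block_offset_decomp:
  "i < sum_list rs \<Longrightarrow> \<exists>a j. a < length rs \<and> j < rs ! a \<and> i = block_offset rs a + j"
proof (induction rs rule: rev_induct)
  case (snoc r rs)
  show ?case
  proof (cases "i < sum_list rs")
    case True
    then obtain a j where "a < length rs" "j < rs ! a" "i = block_offset rs a + j"
      using snoc.IH by blast
    then show ?thesis
      by (intro exI[of _ a] exI[of _ j]) (auto simp: block_offset_def nth_append)
  next
    case False
    then show ?thesis using snoc.prems
      by (intro exI[of _ "length rs"] exI[of _ "i - sum_list rs"]) (auto simp: block_offset_def)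
  qed
qed simp

lemma sum_lessThan_add_nat: "(\<Sum>i < s + r. f i) = (\<Sum>i < s. f i) + (\<Sum>i < r. f (s + i :: nat))"
  by (induction r) (auto simp: add.assoc)

lemma sum_lessThan_sum_list:
  "(\<Sum>i < sum_list rs. f i) = (\<Sum>a < length rs. \<Sum>i < rs ! a. f (block_offset rs a + i))"
proof (induction rs rule: rev_induct)
  case (snoc r rs)
  have "(\<Sum>i < sum_list (rs @ [r]). f i) = (\<Sum>i < sum_list rs. f i) + (\<Sum>i < r. f (sum_list rs + i))"
    by (simp add: sum_lessThan_add_nat)
  also have "(\<Sum>i < sum_list rs. f i)
      = (\<Sum>a < length rs. \<Sum>i < (rs @ [r]) ! a. f (block_offset (rs @ [r]) a + i))"
    unfolding snoc.IH by (intro sum.cong refl) (auto simp: block_offset_def nth_append)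
  finally show ?case by (simp add: block_offset_def)
qed simp

lemma vec_block_carrier [simp]: "vec_block rs z a \<in> carrier_vec (rs ! a)"
  and dim_vec_block [simp]: "dim_vec (vec_block rs z a) = rs ! a"
  unfolding vec_block_def by simp_all

lemma vec_concat_carrier [simp]: "vec_concat rs xs \<in> carrier_vec (sum_list rs)"
  and dim_vec_concat [simp]: "dim_vec (vec_concat rs xs) = sum_list rs"
  unfolding vec_concat_def by simp_all

lemma vec_concat_nth:
  assumes "a < length rs" "i < rs ! a"
  shows "vec_concat rs xs $ (block_offset rs a + i) = xs ! a $ i"
proof -
  have "block_offset rs a + i < sum_list rs"
    using block_offset_add_le[OF assms(1)] assms(2) by simp
  then show ?thesis
    unfolding vec_concat_def using blk_idx_block_offset[OF assms] by simp
qed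

lemma vec_block_concat:
  assumes "list_all2 (\<lambda>r x. x \<in> carrier_vec r) rs xs" "a < length rs"
  shows "vec_block rs (vec_concat rs xs) a = xs ! a"
  using assms by (intro eq_vecI) (auto simp: vec_block_def vec_concat_nth list_all2_conv_all_nth)

lemma vec_block_concat_prefix:
  "vec_block [sum_list rs, sum_list rs'] (vec_concat (rs @ rs') xs) 0
   = vec_concat rs (take (length rs) xs)"
proof (rule eq_vecI)
  fix i assume "i < dim_vec (vec_concat rs (take (length rs) xs))"
  then have "i < sum_list rs" by simp
  then obtain a j where a: "a < length rs" "j < rs ! a" and i: "i = block_offset rs a + j"
    using block_offset_decomp by blast
  have a': "a < length (rs @ rs')" "j < (rs @ rs') ! a"
    using a by (simp_all add: nth_append)
  have "block_offset (rs @ rs') a = block_offset rs a"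
    using a by (simp add: block_offset_def)
  then have "vec_concat (rs @ rs') xs $ i = xs ! a $ j"
    using vec_concat_nth[OF a'] i by simp
  moreover have "vec_concat rs (take (length rs) xs) $ i = xs ! a $ j"
    using vec_concat_nth[OF a] a i by simp
  ultimately show "vec_block [sum_list rs, sum_list rs'] (vec_concat (rs @ rs') xs) 0 $ i
      = vec_concat rs (take (length rs) xs) $ i"
    using \<open>i < sum_list rs\<close> by (simp add: vec_block_def block_offset_def)
qed simp

lemma scalar_prod_blockwise:
  assumes "y \<in> carrier_vec (sum_list rs)" "w \<in> carrier_vec (sum_list rs)"
  shows "y \<bullet> w = (\<Sum>a < length rs. vec_block rs y a \<bullet> vec_block rs w a)"
proof -
  have "y \<bullet> w = (\<Sum>i < sum_list rs. y $ i * w $ i)"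
    using assms by (simp add: scalar_prod_def atLeast0LessThan)
  also have "\<dots> = (\<Sum>a < length rs. \<Sum>i < rs ! a. y $ (block_offset rs a + i) * w $ (block_offset rs a + i))"
    by (rule sum_lessThan_sum_list)
  also have "\<dots> = (\<Sum>a < length rs. vec_block rs y a \<bullet> vec_block rs w a)"
    by (simp add: scalar_prod_def vec_block_def atLeast0LessThan)
  finally show ?thesis .
qed

lemma block_mat_carrier [simp]: "block_mat rs cs Bs \<in> carrier_mat (sum_list rs) (sum_list cs)"
  and dim_row_block_mat [simp]: "dim_row (block_mat rs cs Bs) = sum_list rs"
  and dim_col_block_mat [simp]: "dim_col (block_mat rs cs Bs) = sum_list cs"
  unfolding block_mat_def by simp_all

lemma block_mat_nth:
  assumes "a < length rs" "i < rs ! a" "b < length cs" "j < cs ! b"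
  shows "block_mat rs cs Bs $$ (block_offset rs a + i, block_offset cs b + j) = Bs ! a ! b $$ (i, j)"
proof -
  have "block_offset rs a + i < sum_list rs" "block_offset cs b + j < sum_list cs"
    using block_offset_add_le[OF assms(1)] block_offset_add_le[OF assms(3)] assms(2,4) by simp_all
  then show ?thesis
    unfolding block_mat_def
    using blk_idx_block_offset[OF assms(1,2)] blk_idx_block_offset[OF assms(3,4)]
    by (simp add: block_offset_def)
qed

lemma block_mat_transpose:
  assumes "block_dims rs cs Bs"
  shows "(block_mat rs cs Bs)\<^sup>T = block_mat cs rs (block_transpose rs cs Bs)"
proof (rule eq_matI)
  fix j i
  assume "j < dim_row (block_mat cs rs (block_transpose rs cs Bs))"
    and "i < dim_col (block_mat cs rs (block_transpose rs cs Bs))"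
  then have "j < sum_list cs" "i < sum_list rs" by simp_all
  obtain a i' where a: "a < length rs" "i' < rs ! a" "i = block_offset rs a + i'"
    using block_offset_decomp \<open>i < sum_list rs\<close> by blast
  obtain b j' where b: "b < length cs" "j' < cs ! b" "j = block_offset cs b + j'"
    using block_offset_decomp \<open>j < sum_list cs\<close> by blast
  show "(block_mat rs cs Bs)\<^sup>T $$ (j, i) = block_mat cs rs (block_transpose rs cs Bs) $$ (j, i)"
    using a b \<open>j < sum_list cs\<close> \<open>i < sum_list rs\<close> block_dims_nth[OF assms a(1) b(1)]
    by (simp add: block_mat_nth block_transpose_def)
qed auto

lemma vec_block_mult_block_mat:
  assumes Bs: "block_dims rs cs Bs" and x: "x \<in> carrier_vec (sum_list cs)" and a: "a < length rs"
  shows "vec_block rs (block_mat rs cs Bs *\<^sub>v x) a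
    = vec (rs ! a) (\<lambda>i. \<Sum>b < length cs. (Bs ! a ! b *\<^sub>v vec_block cs x b) $ i)"
proof (rule eq_vecI)
  fix i assume "i < dim_vec (vec (rs ! a) (\<lambda>i. \<Sum>b < length cs. (Bs ! a ! b *\<^sub>v vec_block cs x b) $ i))"
  then have i: "i < rs ! a" by simp
  let ?M = "block_mat rs cs Bs" and ?r = "block_offset rs a + i"
  have r: "?r < sum_list rs" using block_offset_add_le[OF a] i by simp
  have "vec_block rs (?M *\<^sub>v x) a $ i = (\<Sum>j < sum_list cs. ?M $$ (?r, j) * x $ j)"
    using r i x by (simp add: vec_block_def scalar_prod_def atLeast0LessThan)
  also have "\<dots> = (\<Sum>b < length cs. \<Sum>j < cs ! b.
      ?M $$ (?r, block_offset cs b + j) * x $ (block_offset cs b + j))"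
    by (rule sum_lessThan_sum_list)
  also have "\<dots> = (\<Sum>b < length cs. (Bs ! a ! b *\<^sub>v vec_block cs x b) $ i)"
  proof (intro sum.cong refl)
    fix b assume b: "b \<in> {..<length cs}"
    then have "Bs ! a ! b \<in> carrier_mat (rs ! a) (cs ! b)"
      using block_dims_nth[OF Bs a] by simp
    then show "(\<Sum>j < cs ! b. ?M $$ (?r, block_offset cs b + j) * x $ (block_offset cs b + j))
        = (Bs ! a ! b *\<^sub>v vec_block cs x b) $ i"
      using i b a by (simp add: block_mat_nth scalar_prod_def atLeast0LessThan vec_block_def)
  qed
  finally show "vec_block rs (?M *\<^sub>v x) a $ i
      = vec (rs ! a) (\<lambda>i. \<Sum>b < length cs. (Bs ! a ! b *\<^sub>v vec_block cs x b) $ i) $ i"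
    using i by simp
qed simp

lemma vec_block_transpose_mult_block_mat:
  assumes "block_dims rs cs Bs" "y \<in> carrier_vec (sum_list rs)" "b < length cs"
  shows "vec_block cs ((block_mat rs cs Bs)\<^sup>T *\<^sub>v y) b
    = vec (cs ! b) (\<lambda>i. \<Sum>a < length rs. ((Bs ! a ! b)\<^sup>T *\<^sub>v vec_block rs y a) $ i)"
  using vec_block_mult_block_mat[OF block_dims_transpose[OF assms(1)] assms(2,3)] assms(3)
  by (simp add: block_mat_transpose[OF assms(1)] block_transpose_def)

lemma scalar_prod_mult_block_mat:
  assumes Bs: "block_dims rs cs Bs"
    and y: "y \<in> carrier_vec (sum_list rs)" and x: "x \<in> carrier_vec (sum_list cs)"
  shows "y \<bullet> (block_mat rs cs Bs *\<^sub>v x)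
    = (\<Sum>a < length rs. \<Sum>b < length cs. vec_block rs y a \<bullet> (Bs ! a ! b *\<^sub>v vec_block cs x b))"
proof -
  have "y \<bullet> (block_mat rs cs Bs *\<^sub>v x)
      = (\<Sum>a < length rs. vec_block rs y a \<bullet> vec_block rs (block_mat rs cs Bs *\<^sub>v x) a)"
    using y by (intro scalar_prod_blockwise carrier_vecI) simp_all
  also have "\<dots> = (\<Sum>a < length rs. \<Sum>b < length cs. vec_block rs y a \<bullet> (Bs ! a ! b *\<^sub>v vec_block cs x b))"
  proof (intro sum.cong refl)
    fix a assume a: "a \<in> {..<length rs}"
    have "vec_block rs y a \<bullet> vec_block rs (block_mat rs cs Bs *\<^sub>v x) a
        = (\<Sum>i < rs ! a. \<Sum>b < length cs. vec_block rs y a $ i * (Bs ! a ! b *\<^sub>v vec_block cs x b) $ i)"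
      using vec_block_mult_block_mat[OF Bs x] a
      by (simp add: scalar_prod_def atLeast0LessThan sum_distrib_left)
    also have "\<dots> = (\<Sum>b < length cs. vec_block rs y a \<bullet> (Bs ! a ! b *\<^sub>v vec_block cs x b))"
    proof (subst sum.swap, intro sum.cong refl)
      fix b assume "b \<in> {..<length cs}"
      then have "Bs ! a ! b \<in> carrier_mat (rs ! a) (cs ! b)" using block_dims_nth[OF Bs] a by simp
      then show "(\<Sum>i < rs ! a. vec_block rs y a $ i * (Bs ! a ! b *\<^sub>v vec_block cs x b) $ i)
          = vec_block rs y a \<bullet> (Bs ! a ! b *\<^sub>v vec_block cs x b)"
        by (simp add: scalar_prod_def atLeast0LessThan)
    qed
    finally show "vec_block rs y a \<bullet> vec_block rs (block_mat rs cs Bs *\<^sub>v x) a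
        = (\<Sum>b < length cs. vec_block rs y a \<bullet> (Bs ! a ! b *\<^sub>v vec_block cs x b))" .
  qed
  finally show ?thesis .
qed

lemma smult_mat_mult_vec:
  "A \<in> carrier_mat nr nc \<Longrightarrow> v \<in> carrier_vec nc \<Longrightarrow> (k \<cdot>\<^sub>m A) *\<^sub>v v = k \<cdot>\<^sub>v (A *\<^sub>v (v :: real vec))"
  by (intro eq_vecI) auto

lemma mult_mat_vec_uminus:
  "A \<in> carrier_mat nr nc \<Longrightarrow> v \<in> carrier_vec nc \<Longrightarrow> A *\<^sub>v (- v) = - (A *\<^sub>v (v :: real vec))"
  by (intro eq_vecI) auto

lemma transpose_smult_mat: "(k \<cdot>\<^sub>m (A :: real mat))\<^sup>T = k \<cdot>\<^sub>m A\<^sup>T"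
  by (intro eq_matI) auto

lemma scalar_prod_self_nonneg: "0 \<le> (x :: real vec) \<bullet> x"
  unfolding scalar_prod_def by (intro sum_nonneg) auto

(* Side condition on dim_vec rather than carrier_vec, so that simp discharges it for vec_block. *)
lemma zero_mat_mult_vec [simp]: "dim_vec v = c \<Longrightarrow> 0\<^sub>m r c *\<^sub>v v = (0\<^sub>v r :: real vec)"
  by (intro eq_vecI) auto

lemma quadratic_form_minus:
  assumes "M \<in> carrier_mat n n" "N \<in> carrier_mat n n" "x \<in> carrier_vec n"
  shows "x \<bullet> ((M - N) *\<^sub>v x) = x \<bullet> (M *\<^sub>v x) - x \<bullet> (N *\<^sub>v (x :: real vec))"
  using assms by (simp add: minus_mult_distrib_mat_vec scalar_prod_minus_distrib[of x n])

lemma quadratic_form_smult: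
  assumes "M \<in> carrier_mat n n" "x \<in> carrier_vec n"
  shows "x \<bullet> ((k \<cdot>\<^sub>m M) *\<^sub>v x) = k * (x \<bullet> (M *\<^sub>v (x :: real vec)))"
  using assms by (simp add: smult_mat_mult_vec)

lemma quadratic_form_congruence:
  assumes F: "F \<in> carrier_mat r c" and D: "D \<in> carrier_mat c c" and v: "v \<in> carrier_vec r"
  shows "v \<bullet> ((F * D * F\<^sup>T) *\<^sub>v v) = (F\<^sup>T *\<^sub>v v) \<bullet> (D *\<^sub>v (F\<^sup>T *\<^sub>v (v :: real vec)))"
proof -
  have Ft: "F\<^sup>T \<in> carrier_mat c r" using F by simp
  have "(F * D * F\<^sup>T) *\<^sub>v v = (F * D) *\<^sub>v (F\<^sup>T *\<^sub>v v)"
    using F D v by (intro assoc_mult_mat_vec[OF _ Ft]) auto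
  also have "\<dots> = F *\<^sub>v (D *\<^sub>v (F\<^sup>T *\<^sub>v v))"
    using F D Ft v by (intro assoc_mult_mat_vec) auto
  finally show ?thesis
    using F D v transpose_vec_mult_scalar[OF F, of "D *\<^sub>v (F\<^sup>T *\<^sub>v v)" v] by simp
qed

lemma quadratic_form_gram:
  assumes "W \<in> carrier_mat n L" "x \<in> carrier_vec n"
  shows "x \<bullet> ((W * W\<^sup>T) *\<^sub>v x) = (W\<^sup>T *\<^sub>v x) \<bullet> (W\<^sup>T *\<^sub>v (x :: real vec))"
  using assms transpose_vec_mult_scalar[of W n L "W\<^sup>T *\<^sub>v x" x]
  by (simp add: assoc_mult_mat_vec[of W n L])

lemma congruence_symmetric:
  assumes "A \<in> carrier_mat r c" "P \<in> carrier_mat c c" "P\<^sup>T = P"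
  shows "(A * P * A\<^sup>T)\<^sup>T = A * P * (A\<^sup>T :: real mat)"
proof -
  have AP: "A * P \<in> carrier_mat r c" and At: "A\<^sup>T \<in> carrier_mat c r" using assms by auto
  have "(A * P * A\<^sup>T)\<^sup>T = A * (P\<^sup>T * A\<^sup>T)"
    using transpose_mult[OF AP At] transpose_mult[OF assms(1,2)] by simp
  also have "\<dots> = A * P * A\<^sup>T"
    using assms At by (simp add: assoc_mult_mat[of A r c P c])
  finally show ?thesis .
qed

lemma right_inverse_symmetric:
  assumes P: "P \<in> carrier_mat n n" "P\<^sup>T = P"
    and Q: "Q \<in> carrier_mat n n" "P * Q = 1\<^sub>m n"
  shows "Q\<^sup>T = (Q :: real mat)"
proof -
  have "Q\<^sup>T = Q\<^sup>T * (P * Q)" using Q by simp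
  also have "\<dots> = (Q\<^sup>T * P) * Q"
    using P Q by (simp add: assoc_mult_mat[of _ n n _ n _ n])
  also have "Q\<^sup>T * P = (P * Q)\<^sup>T"
    using transpose_mult[OF P(1) Q(1)] P(2) by simp
  finally show ?thesis using P Q by simp
qed

lemma s_procedure_pos:
  assumes "pd_mat k (S - l1 \<cdot>\<^sub>m N1 - l2 \<cdot>\<^sub>m N2)"
    and "S \<in> carrier_mat k k" "N1 \<in> carrier_mat k k" "N2 \<in> carrier_mat k k"
    and "0 \<le> l1" "0 \<le> l2" "0 \<le> z \<bullet> (N1 *\<^sub>v z)" "0 \<le> z \<bullet> (N2 *\<^sub>v z)"
    and "z \<in> carrier_vec k" "z \<noteq> 0\<^sub>v k"
  shows "0 < z \<bullet> (S *\<^sub>v z)"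
proof -
  have "0 < z \<bullet> ((S - l1 \<cdot>\<^sub>m N1 - l2 \<cdot>\<^sub>m N2) *\<^sub>v z)"
    using assms(1,9,10) unfolding pd_mat_def by blast
  also have "\<dots> = z \<bullet> (S *\<^sub>v z) - l1 * (z \<bullet> (N1 *\<^sub>v z)) - l2 * (z \<bullet> (N2 *\<^sub>v z))"
    using assms(2-4,9)
    by (simp add: quadratic_form_minus[of _ k] quadratic_form_smult[of _ k] minus_carrier_mat)
  finally show ?thesis
    using assms(5-8) by (smt (verit) mult_nonneg_nonneg)
qed

lemma N1_mat_carrier: "N1_mat n m L \<beta> H Hp Xi \<in> carrier_mat (3*n+2*m) (3*n+2*m)"
  and N2_mat_carrier: "N2_mat n m \<rho> \<in> carrier_mat (3*n+2*m) (3*n+2*m)"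
  and pad_mat_carrier: "pad_mat n m N \<in> carrier_mat (4*n+2*m) (4*n+2*m)"
  and S_mat_carrier: "S_mat n m \<alpha> P LK \<nu> \<in> carrier_mat (4*n+2*m) (4*n+2*m)"
  unfolding N1_mat_def N2_mat_def pad_mat_def S_mat_def Let_def by (intro carrier_matI; simp)+

lemma pad_mat_quadratic_form:
  assumes N: "N \<in> carrier_mat (3*n+2*m) (3*n+2*m)" and z: "z \<in> carrier_vec (4*n+2*m)"
  shows "z \<bullet> (pad_mat n m N *\<^sub>v z)
    = vec_block [3*n+2*m, n] z 0 \<bullet> (N *\<^sub>v vec_block [3*n+2*m, n] z 0)"
proof -
  have "block_dims [3*n+2*m, n] [3*n+2*m, n] [[N, 0\<^sub>m (3*n+2*m) n], [0\<^sub>m n (3*n+2*m), 0\<^sub>m n n]]"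
    using N by (simp add: block_dims_def)
  moreover have "vec_block [3*n+2*m, n] z 0 \<in> carrier_vec (3*n+2*m)"
    and "vec_block [3*n+2*m, n] z 1 \<in> carrier_vec n"
    using vec_block_carrier[of "[3*n+2*m, n]" z 0] vec_block_carrier[of "[3*n+2*m, n]" z 1]
    by simp_all
  moreover have "z \<in> carrier_vec (sum_list [3*n+2*m, n])" using z by simp
  ultimately show ?thesis
    using scalar_prod_mult_block_mat N by (simp add: pad_mat_def)
qed

lemma N1_mat_quadratic_form:
  fixes x a b c d :: "real vec"
  assumes H: "H \<in> carrier_mat n L" and Hp: "Hp \<in> carrier_mat n L" and Xi: "Xi \<in> carrier_mat m L"
    and vecs: "x \<in> carrier_vec n" "a \<in> carrier_vec n" "b \<in> carrier_vec m"
      "c \<in> carrier_vec n" "d \<in> carrier_vec m"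
  defines "v \<equiv> vec_concat [n,n,m,n,m] [x,a,b,c,d]"
    and "y \<equiv> Hp\<^sup>T *\<^sub>v x - H\<^sup>T *\<^sub>v a - Xi\<^sup>T *\<^sub>v b"
  shows "v \<bullet> (N1_mat n m L \<beta> H Hp Xi *\<^sub>v v) = \<beta> * (x \<bullet> x) - y \<bullet> y"
proof -
  define Fs where "Fs = [[1\<^sub>m n, Hp], [0\<^sub>m n n, -H], [0\<^sub>m m n, -Xi], [0\<^sub>m n n, 0\<^sub>m n L],
    [0\<^sub>m m n, 0\<^sub>m m L :: real mat]]"
  define Ds where "Ds = [[\<beta> \<cdot>\<^sub>m 1\<^sub>m n, 0\<^sub>m n L], [0\<^sub>m L n, -(1\<^sub>m L) :: real mat]]"
  let ?F = "block_mat [n,n,m,n,m] [n,L] Fs" and ?D = "block_mat [n,L] [n,L] Ds"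
  let ?g = "?F\<^sup>T *\<^sub>v v"
  have Fs: "block_dims [n,n,m,n,m] [n,L] Fs" using H Hp Xi by (simp add: block_dims_def Fs_def)
  have Ds: "block_dims [n,L] [n,L] Ds" by (simp add: block_dims_def Ds_def)
  have v: "v \<in> carrier_vec (sum_list [n,n,m,n,m])" unfolding v_def by (rule vec_concat_carrier)
  have blocks: "vec_block [n,n,m,n,m] v k = [x,a,b,c,d] ! k" if "k < 5" for k
    unfolding v_def using that vecs by (intro vec_block_concat) auto
  have g: "?g \<in> carrier_vec (sum_list [n,L])"
    by (rule carrier_vecI) simp
  have g0: "vec_block [n,L] ?g 0 = x"
    using vec_block_transpose_mult_block_mat[OF Fs v, of 0] vecs
    by (intro eq_vecI) (simp_all add: blocks Fs_def)
  have y: "y \<in> carrier_vec L" unfolding y_def using H Hp Xi vecs by simp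
  have g1: "vec_block [n,L] ?g (Suc 0) = y"
    using vec_block_transpose_mult_block_mat[OF Fs v, of "Suc 0"] vecs H Hp Xi
    by (intro eq_vecI) (simp_all add: blocks Fs_def y_def transpose_uminus)
  have "v \<bullet> (N1_mat n m L \<beta> H Hp Xi *\<^sub>v v) = ?g \<bullet> (?D *\<^sub>v ?g)"
    unfolding N1_mat_def Let_def Fs_def[symmetric] Ds_def[symmetric]
    by (rule quadratic_form_congruence[OF block_mat_carrier block_mat_carrier v])
  also have "\<dots> = \<beta> * (x \<bullet> x) - y \<bullet> y"
    using scalar_prod_mult_block_mat[OF Ds, of ?g ?g] vecs y g
    by (simp add: g0 g1 Ds_def smult_mat_mult_vec[of _ n n])
  finally show ?thesis .
qed

lemma N2_mat_quadratic_form: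
  fixes x a b c d :: "real vec"
  assumes vecs: "x \<in> carrier_vec n" "a \<in> carrier_vec n" "b \<in> carrier_vec m"
      "c \<in> carrier_vec n" "d \<in> carrier_vec m"
  defines "v \<equiv> vec_concat [n,n,m,n,m] [x,a,b,c,d]"
  shows "v \<bullet> (N2_mat n m \<rho> *\<^sub>v v) = \<rho>\<^sup>2 * (x \<bullet> x) - c \<bullet> c - d \<bullet> d"
proof -
  define Fs where "Fs = [[1\<^sub>m n, 0\<^sub>m n n, 0\<^sub>m n m], [0\<^sub>m n n, 0\<^sub>m n n, 0\<^sub>m n m],
    [0\<^sub>m m n, 0\<^sub>m m n, 0\<^sub>m m m], [0\<^sub>m n n, 1\<^sub>m n, 0\<^sub>m n m], [0\<^sub>m m n, 0\<^sub>m m n, 1\<^sub>m m :: real mat]]"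
  define Ds where "Ds = [[\<rho>\<^sup>2 \<cdot>\<^sub>m 1\<^sub>m n, 0\<^sub>m n n, 0\<^sub>m n m], [0\<^sub>m n n, -(1\<^sub>m n), 0\<^sub>m n m],
    [0\<^sub>m m n, 0\<^sub>m m n, -(1\<^sub>m m) :: real mat]]"
  let ?F = "block_mat [n,n,m,n,m] [n,n,m] Fs" and ?D = "block_mat [n,n,m] [n,n,m] Ds"
  let ?g = "?F\<^sup>T *\<^sub>v v"
  have Fs: "block_dims [n,n,m,n,m] [n,n,m] Fs" by (simp add: block_dims_def Fs_def)
  have Ds: "block_dims [n,n,m] [n,n,m] Ds" by (simp add: block_dims_def Ds_def)
  have v: "v \<in> carrier_vec (sum_list [n,n,m,n,m])" unfolding v_def by (rule vec_concat_carrier)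
  have g: "?g \<in> carrier_vec (sum_list [n,n,m])" by (rule carrier_vecI) simp
  have blocks: "vec_block [n,n,m,n,m] v k = [x,a,b,c,d] ! k" if "k < 5" for k
    unfolding v_def using that vecs by (intro vec_block_concat) auto
  have g0: "vec_block [n,n,m] ?g 0 = x"
    and g1: "vec_block [n,n,m] ?g (Suc 0) = c"
    and g2: "vec_block [n,n,m] ?g (Suc (Suc 0)) = d"
    using vec_block_transpose_mult_block_mat[OF Fs v] vecs
    by (auto intro!: eq_vecI simp: blocks Fs_def)
  have "v \<bullet> (N2_mat n m \<rho> *\<^sub>v v) = ?g \<bullet> (?D *\<^sub>v ?g)"
    unfolding N2_mat_def Let_def Fs_def[symmetric] Ds_def[symmetric]
    by (rule quadratic_form_congruence[OF block_mat_carrier block_mat_carrier v])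
  also have "\<dots> = \<rho>\<^sup>2 * (x \<bullet> x) - c \<bullet> c - d \<bullet> d"
    using scalar_prod_mult_block_mat[OF Ds, of ?g ?g] vecs g
    by (simp add: g0 g1 g2 Ds_def smult_mat_mult_vec[of _ n n])
  finally show ?thesis .
qed

lemma S_mat_quadratic_form:
  fixes x a1 b1 a2 b2 s :: "real vec"
  assumes P: "P \<in> carrier_mat n n" "P\<^sup>T = P" and LK: "LK \<in> carrier_mat m n"
    and vecs: "x \<in> carrier_vec n" "a1 \<in> carrier_vec n" "b1 \<in> carrier_vec m"
      "a2 \<in> carrier_vec n" "b2 \<in> carrier_vec m" "s \<in> carrier_vec n"
    and Ps: "P *\<^sub>v s = LK\<^sup>T *\<^sub>v (b1 + b2)"
  defines "z \<equiv> vec_concat [n,n,m,n,m,n] [x,a1,b1,a2,b2,-s]"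
  shows "z \<bullet> (S_mat n m \<alpha> P LK \<nu> *\<^sub>v z)
    = x \<bullet> ((\<alpha> \<cdot>\<^sub>m P - \<nu> \<cdot>\<^sub>m 1\<^sub>m n) *\<^sub>v x) - (a1 + a2 + s) \<bullet> (P *\<^sub>v (a1 + a2 + s))"
proof -
  define Ss where "Ss = [[\<alpha> \<cdot>\<^sub>m P - \<nu> \<cdot>\<^sub>m 1\<^sub>m n, 0\<^sub>m n n, 0\<^sub>m n m, 0\<^sub>m n n, 0\<^sub>m n m, 0\<^sub>m n n],
      [0\<^sub>m n n, -P, -(LK\<^sup>T), -P, -(LK\<^sup>T), 0\<^sub>m n n],
      [0\<^sub>m m n, -LK, 0\<^sub>m m m, -LK, 0\<^sub>m m m, LK],
      [0\<^sub>m n n, -P, -(LK\<^sup>T), -P, -(LK\<^sup>T), 0\<^sub>m n n],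
      [0\<^sub>m m n, -LK, 0\<^sub>m m m, -LK, 0\<^sub>m m m, LK],
      [0\<^sub>m n n, 0\<^sub>m n n, LK\<^sup>T, 0\<^sub>m n n, LK\<^sup>T, P]]"
  have Ss: "block_dims [n,n,m,n,m,n] [n,n,m,n,m,n] Ss"
    using P LK by (simp add: block_dims_def Ss_def minus_carrier_mat)
  have z: "z \<in> carrier_vec (sum_list [n,n,m,n,m,n])" unfolding z_def by (rule vec_concat_carrier)
  have blocks: "vec_block [n,n,m,n,m,n] z k = [x,a1,b1,a2,b2,-s] ! k" if "k < 6" for k
    unfolding z_def using that vecs by (intro vec_block_concat) auto
  have LKt: "b \<bullet> (LK *\<^sub>v a) = a \<bullet> (LK\<^sup>T *\<^sub>v b)" if "a \<in> carrier_vec n" "b \<in> carrier_vec m" for a b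
    using transpose_vec_mult_scalar[OF LK that] comm_scalar_prod[of a n "LK\<^sup>T *\<^sub>v b"] that LK by simp
  have Pt: "a \<bullet> (P *\<^sub>v a') = a' \<bullet> (P *\<^sub>v a)" if "a \<in> carrier_vec n" "a' \<in> carrier_vec n" for a a'
    using transpose_vec_mult_scalar[OF P(1) that(2,1)] comm_scalar_prod[of a' n "P *\<^sub>v a"] that P by simp
  have "z \<bullet> (S_mat n m \<alpha> P LK \<nu> *\<^sub>v z) = x \<bullet> ((\<alpha> \<cdot>\<^sub>m P - \<nu> \<cdot>\<^sub>m 1\<^sub>m n) *\<^sub>v x)
      - (a1 \<bullet> (P *\<^sub>v a1) + a1 \<bullet> (LK\<^sup>T *\<^sub>v b1) + a1 \<bullet> (P *\<^sub>v a2) + a1 \<bullet> (LK\<^sup>T *\<^sub>v b2))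
      - (b1 \<bullet> (LK *\<^sub>v a1) + b1 \<bullet> (LK *\<^sub>v a2) + b1 \<bullet> (LK *\<^sub>v s))
      - (a2 \<bullet> (P *\<^sub>v a1) + a2 \<bullet> (LK\<^sup>T *\<^sub>v b1) + a2 \<bullet> (P *\<^sub>v a2) + a2 \<bullet> (LK\<^sup>T *\<^sub>v b2))
      - (b2 \<bullet> (LK *\<^sub>v a1) + b2 \<bullet> (LK *\<^sub>v a2) + b2 \<bullet> (LK *\<^sub>v s))
      - (s \<bullet> (LK\<^sup>T *\<^sub>v b1) + s \<bullet> (LK\<^sup>T *\<^sub>v b2) - s \<bullet> (P *\<^sub>v s))"
    using scalar_prod_mult_block_mat[OF Ss z z] vecs P LK
    by (simp add: S_mat_def Ss_def blocks mult_mat_vec_uminus)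
  also have "\<dots> = x \<bullet> ((\<alpha> \<cdot>\<^sub>m P - \<nu> \<cdot>\<^sub>m 1\<^sub>m n) *\<^sub>v x) - (a1 + a2 + s) \<bullet> (P *\<^sub>v (a1 + a2 + s))"
    using vecs P LK Ps LKt Pt
    by (simp add: mult_add_distrib_mat_vec[of P n n] mult_add_distrib_mat_vec[of "LK\<^sup>T" n m]
        add_scalar_prod_distrib[of _ n] scalar_prod_add_distrib[of _ n])
  finally show ?thesis .
qed

lemma N1_form_nonneg:
  fixes x c d :: "real vec"
  assumes H: "H \<in> carrier_mat n L" and Hp: "Hp \<in> carrier_mat n L" and Xi: "Xi \<in> carrier_mat m L"
    and A: "A \<in> carrier_mat n n" and B: "B \<in> carrier_mat n m" and W: "W \<in> carrier_mat n L"
    and data: "Hp = A * H + B * Xi + W" and noise: "psd_mat n (\<beta> \<cdot>\<^sub>m 1\<^sub>m n - W * W\<^sup>T)"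
    and vecs: "x \<in> carrier_vec n" "c \<in> carrier_vec n" "d \<in> carrier_vec m"
  defines "v \<equiv> vec_concat [n,n,m,n,m] [x, A\<^sup>T *\<^sub>v x, B\<^sup>T *\<^sub>v x, c, d]"
  shows "0 \<le> v \<bullet> (N1_mat n m L \<beta> H Hp Xi *\<^sub>v v)"
proof -
  have "Hp\<^sup>T = H\<^sup>T * A\<^sup>T + Xi\<^sup>T * B\<^sup>T + W\<^sup>T"
    using A B H Xi W unfolding data
    by (simp add: transpose_add[of _ n L] transpose_mult[of _ n n _ L] transpose_mult[of _ n m _ L])
  then have "Hp\<^sup>T *\<^sub>v x - H\<^sup>T *\<^sub>v (A\<^sup>T *\<^sub>v x) - Xi\<^sup>T *\<^sub>v (B\<^sup>T *\<^sub>v x) = W\<^sup>T *\<^sub>v x"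
    using A B H Xi W vecs
    by (auto intro!: eq_vecI simp: add_mult_distrib_mat_vec[of _ L n] assoc_mult_mat_vec[of _ L _ _ n])
  then have "v \<bullet> (N1_mat n m L \<beta> H Hp Xi *\<^sub>v v) = x \<bullet> ((\<beta> \<cdot>\<^sub>m 1\<^sub>m n - W * W\<^sup>T) *\<^sub>v x)"
    using N1_mat_quadratic_form[OF H Hp Xi vecs(1) _ _ vecs(2,3), of "A\<^sup>T *\<^sub>v x" "B\<^sup>T *\<^sub>v x" \<beta>]
      quadratic_form_gram[OF W vecs(1)] A B W vecs
    by (simp add: v_def quadratic_form_minus[of _ n] quadratic_form_smult[of _ n])
  also have "\<dots> \<ge> 0" using noise vecs(1) unfolding psd_mat_def by blast
  finally show ?thesis .
qed

lemma N2_form_nonneg: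
  fixes x a b :: "real vec"
  assumes dA: "dA \<in> carrier_mat n n" and dB: "dB \<in> carrier_mat n m"
    and bound: "psd_mat n (\<rho>\<^sup>2 \<cdot>\<^sub>m 1\<^sub>m n - (dA * dA\<^sup>T + dB * dB\<^sup>T))"
    and vecs: "x \<in> carrier_vec n" "a \<in> carrier_vec n" "b \<in> carrier_vec m"
  defines "v \<equiv> vec_concat [n,n,m,n,m] [x, a, b, dA\<^sup>T *\<^sub>v x, dB\<^sup>T *\<^sub>v x]"
  shows "0 \<le> v \<bullet> (N2_mat n m \<rho> *\<^sub>v v)"
proof -
  have "v \<bullet> (N2_mat n m \<rho> *\<^sub>v v) = x \<bullet> ((\<rho>\<^sup>2 \<cdot>\<^sub>m 1\<^sub>m n - (dA * dA\<^sup>T + dB * dB\<^sup>T)) *\<^sub>v x)"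
    using N2_mat_quadratic_form[OF vecs, of "dA\<^sup>T *\<^sub>v x" "dB\<^sup>T *\<^sub>v x" \<rho>]
      quadratic_form_gram[OF dA vecs(1)] quadratic_form_gram[OF dB vecs(1)] dA dB vecs
    by (simp add: v_def quadratic_form_minus[of _ n] quadratic_form_smult[of _ n]
        add_mult_distrib_mat_vec[of _ n n] scalar_prod_add_distrib[of x n])
  also have "\<dots> \<ge> 0" using bound vecs(1) unfolding psd_mat_def by blast
  finally show ?thesis .
qed

lemma closed_loop_transpose_mult:
  assumes "A \<in> carrier_mat n n" "B \<in> carrier_mat n m" "dA \<in> carrier_mat n n" "dB \<in> carrier_mat n m"
    and "K \<in> carrier_mat m n" "x \<in> carrier_vec n"
  shows "(A + B * K + dA + dB * K)\<^sup>T *\<^sub>v x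
    = A\<^sup>T *\<^sub>v x + dA\<^sup>T *\<^sub>v x + K\<^sup>T *\<^sub>v (B\<^sup>T *\<^sub>v x + dB\<^sup>T *\<^sub>v (x :: real vec))"
  using assms
  by (simp add: transpose_add[of _ n n] transpose_mult[of _ n m _ n] add_mult_distrib_mat_vec[of _ n n]
      assoc_mult_mat_vec[of _ n m _ n] mult_add_distrib_mat_vec[of _ n m])
    (intro eq_vecI; simp)

context
  fixes n m L :: nat and \<alpha> \<beta> \<rho> lam1 lam2 \<nu> :: real
    and H Hp Xi P LK Pinv A B dA dB W K Acl :: "real mat"
  assumes H: "H \<in> carrier_mat n L" and Hp: "Hp \<in> carrier_mat n L" and Xi: "Xi \<in> carrier_mat m L"
    and P: "pd_mat n P" and LK: "LK \<in> carrier_mat m n"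
    and LMI: "pd_mat (4*n+2*m)
               (S_mat n m \<alpha> P LK \<nu> - lam1 \<cdot>\<^sub>m pad_mat n m (N1_mat n m L \<beta> H Hp Xi)
                                   - lam2 \<cdot>\<^sub>m pad_mat n m (N2_mat n m \<rho>))"
    and lam: "0 \<le> lam1" "0 \<le> lam2" and nu: "0 \<le> \<nu>"
    and Pinv: "Pinv \<in> carrier_mat n n" "P * Pinv = 1\<^sub>m n"
    and A: "A \<in> carrier_mat n n" and B: "B \<in> carrier_mat n m"
    and dA: "dA \<in> carrier_mat n n" and dB: "dB \<in> carrier_mat n m" and W: "W \<in> carrier_mat n L"
    and data: "Hp = A * H + B * Xi + W" and noise: "psd_mat n (\<beta> \<cdot>\<^sub>m 1\<^sub>m n - W * W\<^sup>T)"
    and bound: "psd_mat n (\<rho>\<^sup>2 \<cdot>\<^sub>m 1\<^sub>m n - (dA * dA\<^sup>T + dB * dB\<^sup>T))"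
  defines "K \<equiv> LK * Pinv" and "Acl \<equiv> A + B * K + dA + dB * K"
begin

lemma lifted_form_pos:
  fixes x s :: "real vec"
  assumes x: "x \<in> carrier_vec n" "x \<noteq> 0\<^sub>v n" and s: "s \<in> carrier_vec n"
  defines "z \<equiv> vec_concat [n,n,m,n,m,n] [x, A\<^sup>T *\<^sub>v x, B\<^sup>T *\<^sub>v x, dA\<^sup>T *\<^sub>v x, dB\<^sup>T *\<^sub>v x, -s]"
  shows "0 < z \<bullet> (S_mat n m \<alpha> P LK \<nu> *\<^sub>v z)"
proof -
  have sizes: "sum_list [n,n,m,n,m,n] = 4*n+2*m" "sum_list [n,n,m,n,m] = 3*n+2*m" by simp_all
  have z: "z \<in> carrier_vec (4*n+2*m)" unfolding z_def sizes[symmetric] by (rule vec_concat_carrier)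
  have "vec_block [n,n,m,n,m,n] z 0 = x"
    unfolding z_def using A B dA dB x s by (subst vec_block_concat) simp_all
  then have "z \<noteq> 0\<^sub>v (4*n+2*m)" using x(2) by (auto simp: vec_block_def block_offset_def)
  have prefix: "vec_block [3*n+2*m, n] z 0
      = vec_concat [n,n,m,n,m] [x, A\<^sup>T *\<^sub>v x, B\<^sup>T *\<^sub>v x, dA\<^sup>T *\<^sub>v x, dB\<^sup>T *\<^sub>v x]"
    using vec_block_concat_prefix[of "[n,n,m,n,m]" "[n]"] unfolding z_def sizes by simp
  have "0 \<le> z \<bullet> (pad_mat n m (N1_mat n m L \<beta> H Hp Xi) *\<^sub>v z)"
    using pad_mat_quadratic_form[OF N1_mat_carrier z] N1_form_nonneg[OF H Hp Xi A B W data noise x(1)]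
      dA dB x(1) by (simp add: prefix)
  moreover have "0 \<le> z \<bullet> (pad_mat n m (N2_mat n m \<rho>) *\<^sub>v z)"
    using pad_mat_quadratic_form[OF N2_mat_carrier z] N2_form_nonneg[OF dA dB bound x(1)]
      A B x(1) by (simp add: prefix)
  ultimately show ?thesis
    using s_procedure_pos[OF LMI S_mat_carrier pad_mat_carrier pad_mat_carrier lam] z
      \<open>z \<noteq> 0\<^sub>v (4*n+2*m)\<close> by blast
qed

lemma closed_loop_form_pos:
  assumes x: "x \<in> carrier_vec n" "x \<noteq> 0\<^sub>v n"
  shows "0 < x \<bullet> ((\<alpha> \<cdot>\<^sub>m P - Acl * P * Acl\<^sup>T) *\<^sub>v x)"
proof -
  have Pc: "P \<in> carrier_mat n n" and Pt: "P\<^sup>T = P" using P by (simp_all add: pd_mat_def)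
  have Kc: "K \<in> carrier_mat m n" unfolding K_def using LK Pinv by simp
  have Acl: "Acl \<in> carrier_mat n n" unfolding Acl_def using A B dA dB Kc by simp
  define b where "b = B\<^sup>T *\<^sub>v x + dB\<^sup>T *\<^sub>v x"
  define s where "s = K\<^sup>T *\<^sub>v b"
  have b: "b \<in> carrier_vec m" unfolding b_def using B dB x by simp
  have s: "s \<in> carrier_vec n" unfolding s_def using Kc b by simp
  have "K\<^sup>T = Pinv * LK\<^sup>T"
    unfolding K_def using transpose_mult[OF LK Pinv(1)] right_inverse_symmetric[OF Pc Pt Pinv] by simp
  then have Ps: "P *\<^sub>v s = LK\<^sup>T *\<^sub>v b"
    unfolding s_def using assoc_mult_mat_vec[OF Pc Pinv(1), of "LK\<^sup>T *\<^sub>v b"] Pinv LK b by simp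
  have Aclt: "Acl\<^sup>T *\<^sub>v x = A\<^sup>T *\<^sub>v x + dA\<^sup>T *\<^sub>v x + s"
    unfolding Acl_def s_def b_def using closed_loop_transpose_mult[OF A B dA dB Kc x(1)] .
  have "0 < x \<bullet> ((\<alpha> \<cdot>\<^sub>m P - \<nu> \<cdot>\<^sub>m 1\<^sub>m n) *\<^sub>v x) - (Acl\<^sup>T *\<^sub>v x) \<bullet> (P *\<^sub>v (Acl\<^sup>T *\<^sub>v x))"
    using lifted_form_pos[OF x s] S_mat_quadratic_form[OF Pc Pt LK x(1) _ _ _ _ s Ps[unfolded b_def]]
      A B dA dB x(1) unfolding Aclt by simp
  also have "\<dots> \<le> x \<bullet> ((\<alpha> \<cdot>\<^sub>m P - Acl * P * Acl\<^sup>T) *\<^sub>v x)"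
    using quadratic_form_congruence[OF Acl Pc x(1)] Pc Acl x(1) nu scalar_prod_self_nonneg[of x]
    by (simp add: quadratic_form_minus[of _ n] quadratic_form_smult[of _ n])
  finally show ?thesis .
qed

lemma closed_loop_pd: "pd_mat n (\<alpha> \<cdot>\<^sub>m P - Acl * P * Acl\<^sup>T)"
  unfolding pd_mat_def
proof (intro conjI ballI impI closed_loop_form_pos)
  have Pc: "P \<in> carrier_mat n n" and Pt: "P\<^sup>T = P" using P by (simp_all add: pd_mat_def)
  have Acl: "Acl \<in> carrier_mat n n" unfolding Acl_def K_def using A B dA dB LK Pinv by simp
  show "\<alpha> \<cdot>\<^sub>m P - Acl * P * Acl\<^sup>T \<in> carrier_mat n n"
    using Pc Acl by (simp add: minus_carrier_mat)
  show "(\<alpha> \<cdot>\<^sub>m P - Acl * P * Acl\<^sup>T)\<^sup>T = \<alpha> \<cdot>\<^sub>m P - Acl * P * Acl\<^sup>T"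
    using Pc Pt Acl congruence_symmetric[OF Acl Pc Pt]
    by (simp add: transpose_minus[of _ n n] transpose_smult_mat)
qed

end

theorem theorem1:
  fixes n m L :: nat and \<alpha> \<beta> \<rho> lam1 lam2 \<nu> :: real
    and H Hp Xi P LK Pinv :: "real mat"
  assumes dims: "n \<ge> 1" "m \<ge> 1" "L \<ge> 1"
    and alpha: "0 < \<alpha>" "\<alpha> < 1"
    and "\<beta> \<ge> 0" "\<rho> \<ge> 0"
    and H: "H \<in> carrier_mat n L" and Hp: "Hp \<in> carrier_mat n L" and Xi: "Xi \<in> carrier_mat m L"
    and lam: "lam1 \<ge> 0" "lam2 \<ge> 0" and nu: "\<nu> > 0"
    and P: "pd_mat n P" and LK: "LK \<in> carrier_mat m n"
    and LMI: "pd_mat (4*n+2*m)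
               (S_mat n m \<alpha> P LK \<nu> - lam1 \<cdot>\<^sub>m pad_mat n m (N1_mat n m L \<beta> H Hp Xi)
                                   - lam2 \<cdot>\<^sub>m pad_mat n m (N2_mat n m \<rho>))"
    and Pinv: "Pinv \<in> carrier_mat n n" "P * Pinv = 1\<^sub>m n" "Pinv * P = 1\<^sub>m n"
  shows "\<forall>A B dA dB.
           A \<in> carrier_mat n n \<and> B \<in> carrier_mat n m \<and>
           dA \<in> carrier_mat n n \<and> dB \<in> carrier_mat n m \<and>
           (\<exists>W \<in> carrier_mat n L. Hp = A * H + B * Xi + W \<and>
                psd_mat n (\<beta> \<cdot>\<^sub>m 1\<^sub>m n - W * W\<^sup>T)) \<and>
           psd_mat n (\<rho>\<^sup>2 \<cdot>\<^sub>m 1\<^sub>m n - (dA * dA\<^sup>T + dB * dB\<^sup>T))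
         \<longrightarrow> (let K = LK * Pinv; Acl = A + B * K + dA + dB * K
              in pd_mat n (\<alpha> \<cdot>\<^sub>m P - Acl * P * Acl\<^sup>T))"
  using closed_loop_pd[OF H Hp Xi P LK LMI lam less_imp_le[OF nu] Pinv(1,2)]
  unfolding Let_def by blast

end
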